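(* Let $W$ be an $m\times m$ diagonal matrix with positive diagonal entries and $\bar W=W\otimes I_n$. If $\ker(C\bar J')=\operatorname{span}\bar I$ (equivalently, $\bar{\mathbb N}$ is well-configured), then $\bar W\bar J C'C\bar J'$ has exactly $n$ eigenvalues equal to zero (counted with algebraic multiplicity) and all its remaining eigenvalues are real and positive.
   Context: Setup: neighbor graph $\mathbb N$ is a directed graph on $\{1,\dots,m\}$ with $d$ arcs, enumerated $e_1,\dots,e_d$; each arc $e_k=(j,i)$ carries a real matrix $C_{e_k}=C_{ji}$ with $n$ columns. The incidence matrix $J\in\mathbb R^{m\times d}$ has in column $k$ a $+1$ in row $i$ and a $-1$ in row $j$ when $e_k=(j,i)$, zeros elsewhere. $C=\operatorname{blockdiag}(C_{e_1},\dots,C_{e_d})$, $\bar J=J\otimes I_n$, $\bar I=\mathbf 1_m\otimes I_n$, and $\operatorname{span}\bar I$ is the column space of $\bar I$; $'$ denotes transpose. $\bar{\mathbb N}$ is well-configured (for all $x_1,\dots,x_m\in\mathbb R^n$, $C_{ji}x_i=C_{ji}x_j$ for every arc $(j,i)$ implies $x_1=\cdots=x_m$) iff $\ker(C\bar J')=\operatorname{span}\bar I$. *)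

theory Defs
  imports "Jordan_Normal_Form.Matrix_Kernel" "Jordan_Normal_Form.Char_Poly"
begin

definition kron :: "'a :: times mat \<Rightarrow> 'a mat \<Rightarrow> 'a mat" where
  "kron A B = mat (dim_row A * dim_row B) (dim_col A * dim_col B)
     (\<lambda>(i,j). A $$ (i div dim_row B, j div dim_col B) * B $$ (i mod dim_row B, j mod dim_col B))"

fun blockdiag :: "'a :: zero mat list \<Rightarrow> 'a mat" where
  "blockdiag [] = 0\<^sub>m 0 0"
| "blockdiag (A # As) =
     (let B = blockdiag As in
        four_block_mat A (0\<^sub>m (dim_row A) (dim_col B)) (0\<^sub>m (dim_row B) (dim_col A)) B)"

(* incidence matrix J (m x d) of arc list E; arc (j,i) = (tail, head): +1 in row i, -1 in row j.
   Vertices are 0..m-1 (the paper's 1..m shifted). *)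
definition incidence :: "nat \<Rightarrow> (nat \<times> nat) list \<Rightarrow> real mat" where
  "incidence m E = mat m (length E)
     (\<lambda>(r,k). if r = snd (E ! k) then 1 else if r = fst (E ! k) then -1 else 0)"

definition col_space :: "'a :: comm_ring_1 mat \<Rightarrow> 'a vec set" where
  "col_space A = {A *\<^sub>v x | x. x \<in> carrier_vec (dim_col A)}"

end

theory Submission
  imports Defs "Jordan_Normal_Form.Jordan_Normal_Form_Existence"
    "Jordan_Normal_Form.Jordan_Normal_Form_Uniqueness"
begin

text \<open>With \<open>G = C J\<^sup>T\<close> and \<open>D = W \<otimes> I\<^sub>n\<close> the matrix is \<open>M = D G\<^sup>T G\<close>, with \<open>D\<close> diagonal and positive.
  For an eigenpair \<open>(\<lambda>, v)\<close> put \<open>y = G\<^sup>T G v\<close>; then \<open>y\<^sup>* D y = \<lambda> |G v|\<^sup>2\<close>, where both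
  quadratic forms are nonnegative reals, so \<open>\<lambda> \<ge> 0\<close>, and \<open>\<lambda> = 0\<close> only if \<open>G v = 0\<close>.
  The same identity gives \<open>ker M\<^sup>2 = ker M\<close>, so the algebraic multiplicity of \<open>0\<close> is
  \<open>dim ker M = dim ker G\<close>, and well-configuredness identifies \<open>ker G\<close> with the
  \<open>n\<close>-dimensional space of vectors \<open>1\<^sub>m \<otimes> x\<close>, i.e. vectors periodic with period \<open>n\<close>.\<close>

lemma dim_kron [simp]:
  "dim_row (kron A B) = dim_row A * dim_row B"
  "dim_col (kron A B) = dim_col A * dim_col B"
  by (simp_all add: kron_def)

lemma index_kron:
  assumes "i < dim_row A * dim_row B" and "j < dim_col A * dim_col B"
  shows "kron A B $$ (i,j) =
    A $$ (i div dim_row B, j div dim_col B) * B $$ (i mod dim_row B, j mod dim_col B)"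
  using assms by (simp add: kron_def)

lemma index_kron_one:
  fixes A :: "'a :: semiring_1 mat"
  assumes "i < dim_row A * n" and "j < dim_col A * n"
  shows "kron A (1\<^sub>m n) $$ (i,j) = (if i mod n = j mod n then A $$ (i div n, j div n) else 0)"
proof -
  have "0 < n" using assms(1) by (cases n) auto
  then show ?thesis using assms by (simp add: index_kron)
qed

lemma diagonal_mat_kron_one:
  fixes A :: "'a :: semiring_1 mat"
  assumes "diagonal_mat A"
  shows "diagonal_mat (kron A (1\<^sub>m n))"
  unfolding diagonal_mat_def
proof (intro allI impI)
  fix i j assume i: "i < dim_row (kron A (1\<^sub>m n))" and j: "j < dim_col (kron A (1\<^sub>m n))" and "i \<noteq> j"
  then have "i div n \<noteq> j div n \<or> i mod n \<noteq> j mod n" by (metis div_mult_mod_eq)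
  moreover have "i div n < dim_row A" "j div n < dim_col A"
    using i j by (simp_all add: less_mult_imp_div_less)
  ultimately show "kron A (1\<^sub>m n) $$ (i,j) = 0"
    using i j assms by (auto simp: index_kron_one diagonal_mat_def)
qed

lemma dim_col_blockdiag:
  "(\<And>A. A \<in> set As \<Longrightarrow> dim_col A = n) \<Longrightarrow> dim_col (blockdiag As) = length As * n"
  by (induction As) (auto simp: Let_def)

lemma mult_transpose_eq_gram:
  fixes W J C :: "'a :: comm_semiring_1 mat"
  assumes "W \<in> carrier_mat K K" and "J \<in> carrier_mat K D" and "C \<in> carrier_mat R D"
  shows "W * J * transpose_mat C * C * transpose_mat J =
    W * (transpose_mat (C * transpose_mat J) * (C * transpose_mat J))"
proof -
  have CT: "transpose_mat C \<in> carrier_mat D R" and JT: "transpose_mat J \<in> carrier_mat D K"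
    and JC: "J * transpose_mat C \<in> carrier_mat K R" using assms by auto
  have "W * J * transpose_mat C * C * transpose_mat J = W * (J * transpose_mat C) * C * transpose_mat J"
    using assoc_mult_mat[OF assms(1,2) CT] by simp
  also have "\<dots> = W * (J * transpose_mat C * C) * transpose_mat J"
    using assoc_mult_mat[OF assms(1) JC assms(3)] by simp
  also have "\<dots> = W * (J * transpose_mat C * C * transpose_mat J)"
    using assoc_mult_mat[OF assms(1) mult_carrier_mat[OF JC assms(3)] JT] by simp
  also have "J * transpose_mat C * C * transpose_mat J = (J * transpose_mat C) * (C * transpose_mat J)"
    using assoc_mult_mat[OF JC assms(3) JT] by simp
  finally show ?thesis
    using assms by (simp add: transpose_mult[of C R D])
qed

definition periodic_vecs :: "nat \<Rightarrow> nat \<Rightarrow> 'a vec set" where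
  "periodic_vecs N n = {v \<in> carrier_vec N. \<forall>i<N. v $ i = v $ (i mod n)}"

lemma kron_ones_one_mult_vec:
  assumes "i < m * n" and "x \<in> carrier_vec n"
  shows "(kron (mat m 1 (\<lambda>_. 1)) (1\<^sub>m n) *\<^sub>v x) $ i = (x $ (i mod n) :: 'a :: comm_ring_1)"
proof -
  have "0 < n" and "i div n < m" using assms(1) by (auto simp: less_mult_imp_div_less intro: gr0I)
  then have "kron (mat m 1 (\<lambda>_. 1)) (1\<^sub>m n) $$ (i,j) * x $ j = (if j = i mod n then x $ j else 0)"
    if "j < n" for j
    using assms(1) that index_kron_one[of i "mat m 1 (\<lambda>_. 1) :: 'a mat" n j] by auto
  then have "(kron (mat m 1 (\<lambda>_. 1)) (1\<^sub>m n) *\<^sub>v x) $ i =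
      (\<Sum>j\<in>{0..<n}. if j = i mod n then x $ j else 0)"
    using assms by (auto simp: scalar_prod_def intro!: sum.cong)
  also have "\<dots> = x $ (i mod n)" using \<open>0 < n\<close> by simp
  finally show ?thesis .
qed

lemma col_space_kron_ones_one:
  "col_space (kron (mat m 1 (\<lambda>_. 1)) (1\<^sub>m n) :: 'a :: comm_ring_1 mat) = periodic_vecs (m * n) n"
proof (rule equalityI; rule subsetI)
  fix y :: "'a vec"
  assume "y \<in> col_space (kron (mat m 1 (\<lambda>_. 1)) (1\<^sub>m n))"
  then obtain x where x: "x \<in> carrier_vec n" and y: "y = kron (mat m 1 (\<lambda>_. 1)) (1\<^sub>m n) *\<^sub>v x"
    by (auto simp: col_space_def)
  have "i mod n < m * n" if "i < m * n" for i
    using that by (meson le_less_trans mod_less_eq_dividend)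
  moreover have "y $ i = x $ (i mod n)" if "i < m * n" for i
    using kron_ones_one_mult_vec[OF that x] by (simp add: y)
  moreover have "y \<in> carrier_vec (m * n)" by (simp add: y carrier_vecI)
  ultimately show "y \<in> periodic_vecs (m * n) n" by (simp add: periodic_vecs_def)
next
  fix y :: "'a vec"
  assume y: "y \<in> periodic_vecs (m * n) n"
  define x where "x = vec n (\<lambda>i. y $ i)"
  have x: "x \<in> carrier_vec n" by (simp add: x_def)
  have "kron (mat m 1 (\<lambda>_. 1)) (1\<^sub>m n) *\<^sub>v x = y"
  proof (rule eq_vecI)
    fix i assume "i < dim_vec y"
    then have "i < m * n" and "0 < n" using y by (auto simp: periodic_vecs_def intro: gr0I)
    then show "(kron (mat m 1 (\<lambda>_. 1)) (1\<^sub>m n) *\<^sub>v x) $ i = y $ i"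
      using y unfolding kron_ones_one_mult_vec[OF \<open>i < m * n\<close> x]
      by (simp add: x_def periodic_vecs_def)
  qed (use y in \<open>auto simp: periodic_vecs_def\<close>)
  with x show "y \<in> col_space (kron (mat m 1 (\<lambda>_. 1)) (1\<^sub>m n))"
    by (auto simp: col_space_def)
qed

text \<open>The matrix is in row echelon form with \<open>N - n\<close> pivots.\<close>

definition periodicity_mat :: "nat \<Rightarrow> nat \<Rightarrow> 'a :: ring_1 mat" where
  "periodicity_mat N n = mat N N (\<lambda>(i,j).
     (if i < N - n \<and> j = i then 1 else 0) - (if i < N - n \<and> j = N - n + i mod n then 1 else 0))"

lemma periodicity_mat_carrier: "periodicity_mat N n \<in> carrier_mat N N"
  by (simp add: periodicity_mat_def)

lemma kernel_dim_periodicity_mat: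
  assumes "n \<le> N"
  shows "kernel_dim (periodicity_mat N n :: 'a :: field mat) = n"
proof -
  let ?P = "periodicity_mat N n :: 'a mat"
  have "pivot_fun ?P (\<lambda>i. if i < N - n then i else N) N"
    by (rule pivot_funI) (auto simp: periodicity_mat_def split: if_splits)
  then have ref: "row_echelon_form ?P"
    unfolding row_echelon_form_def by (auto simp: periodicity_mat_def)
  have rows: "{i. i < N \<and> row ?P i \<noteq> 0\<^sub>v N} = {..<N - n}"
  proof -
    have "i < N \<and> row ?P i \<noteq> 0\<^sub>v N \<longleftrightarrow> i < N - n" for i
    proof
      assume "i < N \<and> row ?P i \<noteq> 0\<^sub>v N"
      then show "i < N - n" by (auto simp: periodicity_mat_def vec_eq_iff split: if_splits)
    next
      assume "i < N - n"
      then have "row ?P i $ i = 1" by (simp add: periodicity_mat_def)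
      then show "i < N \<and> row ?P i \<noteq> 0\<^sub>v N" using \<open>i < N - n\<close> by auto
    qed
    then show ?thesis by auto
  qed
  have "dim_col ?P = N" by (simp add: periodicity_mat_def)
  then show ?thesis
    using find_base_vectors(6)[OF ref periodicity_mat_carrier] assms unfolding rows kernel_dim_def
    by simp
qed

lemma periodicity_mat_mult_vec:
  assumes v: "v \<in> carrier_vec N" and i: "i < N" and n: "0 < n" "n \<le> N"
  shows "(periodicity_mat N n *\<^sub>v v) $ i =
    (if i < N - n then v $ i - v $ (N - n + i mod n) else (0 :: 'a :: ring_1))"
proof -
  have "N - n + i mod n < N" using mod_less_divisor[OF n(1), of i] n(2) by linarith
  have "(periodicity_mat N n *\<^sub>v v) $ i = (\<Sum>j<N. ((if i < N - n \<and> j = i then 1 else 0)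
      - (if i < N - n \<and> j = N - n + i mod n then 1 else 0)) * v $ j)"
    using v i by (auto simp: periodicity_mat_def scalar_prod_def lessThan_atLeast0 intro!: sum.cong)
  also have "\<dots> = (\<Sum>j<N. if i < N - n \<and> j = i then v $ j else 0)
      - (\<Sum>j<N. if i < N - n \<and> j = N - n + i mod n then v $ j else 0)"
    by (subst sum_subtractf[symmetric], rule sum.cong) auto
  also have "\<dots> = (if i < N - n then v $ i - v $ (N - n + i mod n) else 0)"
    using i \<open>N - n + i mod n < N\<close> by simp
  finally show ?thesis .
qed

lemma mat_kernel_periodicity_mat:
  assumes "n dvd N"
  shows "mat_kernel (periodicity_mat N n :: 'a :: comm_ring_1 mat) = periodic_vecs N n"
proof (cases "N = 0")
  case True
  then show ?thesis
    by (auto simp: mat_kernel_def periodic_vecs_def periodicity_mat_def intro!: eq_vecI)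
next
  case False
  with assms obtain m where N: "N = n * m" and "0 < n" "0 < m" by (auto elim!: dvdE)
  then have "n \<le> N" by simp
  have N_minus: "N - n = n * (m - 1)" using N by (simp add: right_diff_distrib')
  define c where "c i = N - n + i mod n" for i
  have c_mod: "c i mod n = i mod n" for i
    by (simp add: c_def N_minus)
  have c_lt: "c i < N" for i
    using mod_less_divisor[OF \<open>0 < n\<close>, of i] \<open>n \<le> N\<close> by (simp add: c_def)
  have c_top: "c i = i" if "i < N" "\<not> i < N - n" for i
  proof -
    define t where "t = i - (N - n)"
    have "i = (N - n) + t" and "t < n" using that \<open>n \<le> N\<close> by (auto simp: t_def)
    then show ?thesis by (simp add: c_def N_minus)
  qed
  have kernel_iff: "v \<in> mat_kernel (periodicity_mat N n) \<longleftrightarrow>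
      v \<in> carrier_vec N \<and> (\<forall>i<N. v $ i = v $ c i)" for v :: "'a vec"
  proof -
    have "(periodicity_mat N n *\<^sub>v v) $ i = 0 \<longleftrightarrow> v $ i = v $ c i"
      if v: "v \<in> carrier_vec N" and i: "i < N" for i
      using periodicity_mat_mult_vec[OF v i \<open>0 < n\<close> \<open>n \<le> N\<close>, folded c_def] c_top[OF i]
      by (cases "i < N - n") auto
    then have "periodicity_mat N n *\<^sub>v v = 0\<^sub>v N \<longleftrightarrow> (\<forall>i<N. v $ i = v $ c i)"
      if v: "v \<in> carrier_vec N"
      using v by (auto simp: vec_eq_iff periodicity_mat_def)
    then show ?thesis using mat_kernel[OF periodicity_mat_carrier] by blast
  qed
  have "(\<forall>i<N. v $ i = v $ c i) \<longleftrightarrow> (\<forall>i<N. v $ i = v $ (i mod n))" for v :: "'a vec"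
  proof
    assume "\<forall>i<N. v $ i = v $ c i"
    moreover have "i mod n < N" for i using mod_less_divisor[OF \<open>0 < n\<close>, of i] \<open>n \<le> N\<close> by linarith
    moreover have "c (i mod n) = c i" for i by (simp add: c_def)
    ultimately show "\<forall>i<N. v $ i = v $ (i mod n)" by metis
  next
    assume "\<forall>i<N. v $ i = v $ (i mod n)"
    then show "\<forall>i<N. v $ i = v $ c i" using c_lt c_mod by metis
  qed
  then show ?thesis using kernel_iff by (auto simp: periodic_vecs_def)
qed

lemma kernel_dim_eq_period:
  fixes A :: "'a :: field mat"
  assumes "dim_col A = N" and "mat_kernel A = periodic_vecs N n" and "n dvd N" and "n \<le> N"
  shows "kernel_dim A = n"
proof -
  have "mat_kernel A = mat_kernel (periodicity_mat N n :: 'a mat)"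
    using assms(2,3) by (simp add: mat_kernel_periodicity_mat)
  then have "kernel_dim A = kernel_dim (periodicity_mat N n :: 'a mat)"
    using assms(1) periodicity_mat_carrier[of N n, where 'a = 'a] by (simp add: kernel_dim_def)
  then show ?thesis using assms(4) by (simp add: kernel_dim_periodicity_mat)
qed

lemma conjugate_of_real_mult_mat_vec:
  fixes A :: "real mat" and x :: "complex vec"
  assumes "A \<in> carrier_mat nr nc" and "x \<in> carrier_vec nc"
  shows "conjugate (map_mat of_real A *\<^sub>v x) = map_mat of_real A *\<^sub>v conjugate x"
  using assms by (intro eq_vecI) (auto simp: scalar_prod_def sum_conjugate)

lemma of_real_transpose_cscalar_prod:
  fixes G :: "real mat" and x y :: "complex vec"
  assumes G: "G \<in> carrier_mat nr nc" and x: "x \<in> carrier_vec nc" and y: "y \<in> carrier_vec nr"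
  shows "(map_mat of_real (transpose_mat G) *\<^sub>v y) \<bullet>c x = y \<bullet>c (map_mat of_real G *\<^sub>v x)"
proof -
  have "map_mat of_real (transpose_mat G) = transpose_mat (map_mat complex_of_real G)" by auto
  then show ?thesis
    using transpose_vec_mult_scalar[of "map_mat of_real G" nr nc "conjugate x" y] G x y
    by (simp add: conjugate_of_real_mult_mat_vec)
qed

lemma diagonal_mult_vec:
  assumes "D \<in> carrier_mat n n" and "diagonal_mat D" and "v \<in> carrier_vec n"
  shows "D *\<^sub>v v = vec n (\<lambda>i. D $$ (i,i) * v $ i)"
proof (rule eq_vecI)
  fix i assume "i < dim_vec (vec n (\<lambda>i. D $$ (i,i) * v $ i))"
  then have "i < n" by simp
  have "row D i \<bullet> v = (\<Sum>j\<in>{0..<n}. if j = i then D $$ (i,i) * v $ j else 0)"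
    using assms \<open>i < n\<close> unfolding diagonal_mat_def scalar_prod_def by (intro sum.cong) auto
  then show "(D *\<^sub>v v) $ i = vec n (\<lambda>i. D $$ (i,i) * v $ i) $ i"
    using assms \<open>i < n\<close> by simp
qed (use assms in auto)

lemma cscalar_prod_swap:
  fixes v w :: "'a :: {conjugatable_ring, comm_ring} vec"
  assumes "v \<in> carrier_vec n" and "w \<in> carrier_vec n"
  shows "w \<bullet>c v = conjugate (v \<bullet>c w)"
  using assms by (simp add: conjugate_vec_sprod_comm[of v n w])

lemma of_real_mult_mat_vec_Re_Im:
  fixes G :: "real mat" and v :: "complex vec"
  assumes "G \<in> carrier_mat R K" and "v \<in> carrier_vec K" and "k < R"
  shows "Re ((map_mat of_real G *\<^sub>v v) $ k) = (G *\<^sub>v map_vec Re v) $ k"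
    and "Im ((map_mat of_real G *\<^sub>v v) $ k) = (G *\<^sub>v map_vec Im v) $ k"
  using assms by (auto simp: scalar_prod_def Re_sum Im_sum intro!: sum.cong)

lemma mat_kernel_of_real:
  fixes G :: "real mat" and v :: "complex vec"
  assumes G: "G \<in> carrier_mat R K"
  shows "v \<in> mat_kernel (map_mat of_real G) \<longleftrightarrow>
    map_vec Re v \<in> mat_kernel G \<and> map_vec Im v \<in> mat_kernel G"
proof (cases "v \<in> carrier_vec K")
  case True
  have "map_mat of_real G *\<^sub>v v = 0\<^sub>v R \<longleftrightarrow>
      G *\<^sub>v map_vec Re v = 0\<^sub>v R \<and> G *\<^sub>v map_vec Im v = 0\<^sub>v R"
  proof -
    have "(map_mat of_real G *\<^sub>v v) $ k = 0 \<longleftrightarrow>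
        (G *\<^sub>v map_vec Re v) $ k = 0 \<and> (G *\<^sub>v map_vec Im v) $ k = 0" if "k < R" for k
      using of_real_mult_mat_vec_Re_Im[OF G True that] by (simp add: complex_eq_iff)
    then show ?thesis using G by (simp add: vec_eq_iff) blast
  qed
  then show ?thesis using G True by (simp add: mat_kernel_def)
qed (use G in \<open>simp add: mat_kernel_def\<close>)

lemma periodic_vecs_Re_Im:
  "v \<in> periodic_vecs N n \<longleftrightarrow> map_vec Re v \<in> periodic_vecs N n \<and> map_vec Im v \<in> periodic_vecs N n"
proof (cases "v \<in> carrier_vec N")
  case True
  have "i mod n < N" if "i < N" for i
    using that by (meson le_less_trans mod_less_eq_dividend)
  then have "v $ i = v $ (i mod n) \<longleftrightarrow>
      map_vec Re v $ i = map_vec Re v $ (i mod n) \<and> map_vec Im v $ i = map_vec Im v $ (i mod n)"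
    if "i < N" for i
    using True that by (simp add: complex_eq_iff)
  then show ?thesis using True unfolding periodic_vecs_def by auto
qed (simp add: periodic_vecs_def)

lemma mat_kernel_of_real_periodic:
  fixes G :: "real mat"
  assumes "G \<in> carrier_mat R N" and "mat_kernel G = periodic_vecs N n"
  shows "mat_kernel (map_mat complex_of_real G) = periodic_vecs N n"
proof -
  have "v \<in> mat_kernel (map_mat of_real G) \<longleftrightarrow> v \<in> periodic_vecs N n" for v :: "complex vec"
    unfolding mat_kernel_of_real[OF assms(1)] assms(2) periodic_vecs_Re_Im[of v] ..
  then show ?thesis by blast
qed

lemma mat_kernel_pow_eq_mat_kernel:
  fixes B :: "'a :: field mat"
  assumes B: "B \<in> carrier_mat K K"
    and square_kernel: "\<And>v. v \<in> carrier_vec K \<Longrightarrow> B *\<^sub>v (B *\<^sub>v v) = 0\<^sub>v K \<Longrightarrow> B *\<^sub>v v = 0\<^sub>v K"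
  shows "mat_kernel (B ^\<^sub>m Suc k) = mat_kernel B"
proof -
  have "(B ^\<^sub>m Suc k) *\<^sub>v v = 0\<^sub>v K \<longleftrightarrow> B *\<^sub>v v = 0\<^sub>v K" if v: "v \<in> carrier_vec K" for v
    using v
  proof (induction k arbitrary: v)
    case (Suc k)
    have "(B ^\<^sub>m Suc (Suc k)) *\<^sub>v v = (B ^\<^sub>m Suc k) *\<^sub>v (B *\<^sub>v v)"
      by (subst pow_mat.simps(2)) (rule assoc_mult_mat_vec[OF pow_carrier_mat[OF B] B Suc.prems])
    also have "\<dots> = 0\<^sub>v K \<longleftrightarrow> B *\<^sub>v (B *\<^sub>v v) = 0\<^sub>v K"
      using Suc.IH[of "B *\<^sub>v v"] Suc.prems B by simp
    also have "\<dots> \<longleftrightarrow> B *\<^sub>v v = 0\<^sub>v K"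
      using square_kernel[OF Suc.prems] B by (auto simp: scalar_prod_def intro!: eq_vecI)
    finally show ?case .
  qed (use B in simp)
  then show ?thesis
    unfolding mat_kernel[OF B] mat_kernel[OF pow_carrier_mat[OF B]] by blast
qed

lemma order_char_poly_eq_kernel_dim:
  fixes A :: "complex mat"
  assumes A: "A \<in> carrier_mat K K"
    and square_kernel: "\<And>v. v \<in> carrier_vec K \<Longrightarrow>
      char_matrix A ev *\<^sub>v (char_matrix A ev *\<^sub>v v) = 0\<^sub>v K \<Longrightarrow> char_matrix A ev *\<^sub>v v = 0\<^sub>v K"
  shows "order ev (char_poly A) = kernel_dim (char_matrix A ev)"
proof -
  obtain n_as where jnf: "jordan_nf A n_as"
    using char_poly_factorized[OF A] jordan_nf_exists[OF A] by blast
  define S where "S = sum_list (map fst n_as)"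
  have "order ev (char_poly A) = sum_list (map fst (filter (\<lambda>na. snd na = ev) n_as))"
    by (rule jordan_nf_order[OF jnf])
  also have "\<dots> = (\<Sum>n \<leftarrow> map fst [(n, e)\<leftarrow>n_as . e = ev]. min (Suc S) n)"
  proof -
    have "min (Suc S) n = n" if "n \<in> set (map fst n_as)" for n
      using member_le_sum_list[OF that] by (simp add: S_def)
    then show ?thesis by (induction n_as) (auto simp: S_def)
  qed
  also have "\<dots> = dim_gen_eigenspace A ev (Suc S)"
    by (rule dim_gen_eigenspace[OF jnf, symmetric])
  also have "\<dots> = kernel_dim (char_matrix A ev)"
    unfolding dim_gen_eigenspace_def kernel_dim_def
    using mat_kernel_pow_eq_mat_kernel[OF char_matrix_closed[OF A] square_kernel] A by simp
  finally show ?thesis .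
qed

locale weighted_gram =
  fixes D G :: "real mat" and K R :: nat
  assumes D_carrier: "D \<in> carrier_mat K K" and D_diagonal: "diagonal_mat D"
    and D_pos: "\<forall>i<K. 0 < D $$ (i,i)" and G_carrier: "G \<in> carrier_mat R K"
begin

definition gram :: "complex mat" where
  "gram = map_mat of_real (D * (transpose_mat G * G))"

lemma gram_carrier: "gram \<in> carrier_mat K K"
  using D_carrier G_carrier by (simp add: gram_def)

lemma gram_mult_vec:
  assumes "v \<in> carrier_vec K"
  shows "gram *\<^sub>v v =
    map_mat of_real D *\<^sub>v (map_mat of_real (transpose_mat G) *\<^sub>v (map_mat of_real G *\<^sub>v v))"
proof -
  have GT: "map_mat complex_of_real (transpose_mat G) \<in> carrier_mat K R"
    and Gc: "map_mat complex_of_real G \<in> carrier_mat R K"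
    and Dc: "map_mat complex_of_real D \<in> carrier_mat K K"
    using D_carrier G_carrier by auto
  have "gram = map_mat of_real D * (map_mat of_real (transpose_mat G) * map_mat of_real G)"
    using D_carrier G_carrier
    by (simp add: gram_def of_real_hom.mat_hom_mult[of _ K K _ K] of_real_hom.mat_hom_mult[of _ K R _ K])
  then show ?thesis
    using assms assoc_mult_mat_vec[OF Dc mult_carrier_mat[OF GT Gc]] assoc_mult_mat_vec[OF GT Gc] by simp
qed

lemma weighted_cscalar_prod:
  fixes y :: "complex vec"
  assumes "y \<in> carrier_vec K"
  shows "(map_mat of_real D *\<^sub>v y) \<bullet>c y = (\<Sum>i<K. of_real (D $$ (i,i)) * (y $ i * conjugate (y $ i)))"
  using assms D_carrier D_diagonal
  by (simp add: diagonal_mult_vec[of _ K] diagonal_mat_def scalar_prod_def lessThan_atLeast0 mult.assoc)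

lemma weighted_cscalar_prod_nonneg:
  fixes y :: "complex vec"
  assumes "y \<in> carrier_vec K"
  shows "0 \<le> (map_mat of_real D *\<^sub>v y) \<bullet>c y"
  unfolding weighted_cscalar_prod[OF assms] using D_pos
  by (intro sum_nonneg mult_nonneg_nonneg conjugate_square_positive) (auto simp: less_eq_complex_def)

lemma weighted_cscalar_prod_eq_0_iff:
  fixes y :: "complex vec"
  assumes "y \<in> carrier_vec K"
  shows "(map_mat of_real D *\<^sub>v y) \<bullet>c y = 0 \<longleftrightarrow> y = 0\<^sub>v K"
proof
  assume "(map_mat of_real D *\<^sub>v y) \<bullet>c y = 0"
  then have "\<forall>i\<in>{..<K}. of_real (D $$ (i,i)) * (y $ i * conjugate (y $ i)) = 0"
    unfolding weighted_cscalar_prod[OF assms] using D_pos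
    by (subst (asm) sum_nonneg_eq_0_iff)
      (auto intro!: mult_nonneg_nonneg conjugate_square_positive simp: less_eq_complex_def)
  then have "\<forall>i<K. y $ i = 0" using D_pos by (metis lessThan_iff less_irrefl mult_eq_0_iff
      conjugate_square_eq_0 of_real_eq_0_iff)
  then show "y = 0\<^sub>v K" using assms by (intro eq_vecI) auto
qed (simp add: scalar_prod_def)

lemma gram_mult_vec_eq_0_iff:
  assumes v: "v \<in> carrier_vec K"
  shows "gram *\<^sub>v v = 0\<^sub>v K \<longleftrightarrow> map_mat of_real G *\<^sub>v v = 0\<^sub>v R"
proof
  define x where "x = map_mat of_real G *\<^sub>v v"
  define y where "y = map_mat of_real (transpose_mat G) *\<^sub>v x"
  have x: "x \<in> carrier_vec R" and y: "y \<in> carrier_vec K"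
    using G_carrier v by (auto simp: x_def y_def)
  assume "gram *\<^sub>v v = 0\<^sub>v K"
  then have "(map_mat of_real D *\<^sub>v y) \<bullet>c y = 0"
    using y by (simp add: gram_mult_vec[OF v] x_def y_def)
  then have "y = 0\<^sub>v K" using weighted_cscalar_prod_eq_0_iff[OF y] by simp
  moreover have "x \<bullet>c x = y \<bullet>c v"
    using of_real_transpose_cscalar_prod[OF G_carrier v x] by (simp add: x_def y_def)
  ultimately have "x \<bullet>c x = 0" using v by (simp add: scalar_prod_def)
  then show "x = 0\<^sub>v R" using x by simp
qed (use v D_carrier G_carrier in \<open>auto simp: gram_mult_vec scalar_prod_def intro!: eq_vecI\<close>)

lemma gram_square_kernel:
  assumes v: "v \<in> carrier_vec K" and "gram *\<^sub>v (gram *\<^sub>v v) = 0\<^sub>v K"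
  shows "gram *\<^sub>v v = 0\<^sub>v K"
proof -
  define x where "x = map_mat of_real G *\<^sub>v v"
  define y where "y = map_mat of_real (transpose_mat G) *\<^sub>v x"
  have x: "x \<in> carrier_vec R" and y: "y \<in> carrier_vec K"
    using G_carrier v by (auto simp: x_def y_def)
  define u where "u = gram *\<^sub>v v"
  have u: "u \<in> carrier_vec K"
    using gram_carrier v by (simp add: u_def)
  have u_eq: "u = map_mat of_real D *\<^sub>v y"
    by (simp add: u_def gram_mult_vec[OF v] x_def y_def)
  have "map_mat of_real G *\<^sub>v u = 0\<^sub>v R"
    using assms gram_mult_vec_eq_0_iff[OF u] by (simp add: u_def)
  then have "y \<bullet>c u = 0"
    using of_real_transpose_cscalar_prod[OF G_carrier u x] by (simp add: y_def scalar_prod_def)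
  then have "(map_mat of_real D *\<^sub>v y) \<bullet>c y = 0"
    using cscalar_prod_swap[OF y u] by (simp add: u_eq)
  then have "y = 0\<^sub>v K" using weighted_cscalar_prod_eq_0_iff[OF y] by simp
  then show ?thesis using D_carrier by (auto simp: u_def[symmetric] u_eq scalar_prod_def intro!: eq_vecI)
qed

lemma mat_kernel_gram: "mat_kernel gram = mat_kernel (map_mat of_real G)"
  using gram_mult_vec_eq_0_iff gram_carrier G_carrier by (auto simp: mat_kernel_def)

lemma order_zero_char_poly_gram: "order 0 (char_poly gram) = kernel_dim gram"
proof -
  have "char_matrix gram 0 = gram"
    using gram_carrier by (auto simp: char_matrix_def)
  then show ?thesis
    using order_char_poly_eq_kernel_dim[OF gram_carrier, of 0] gram_square_kernel by simp
qed

lemma gram_eigenvalue_nonneg: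
  assumes "eigenvalue gram ev"
  shows "0 \<le> ev"
proof -
  obtain v where v: "v \<in> carrier_vec K" and v0: "v \<noteq> 0\<^sub>v K" and ev: "gram *\<^sub>v v = ev \<cdot>\<^sub>v v"
    using assms gram_carrier unfolding eigenvalue_def eigenvector_def by auto
  define x where "x = map_mat of_real G *\<^sub>v v"
  define y where "y = map_mat of_real (transpose_mat G) *\<^sub>v x"
  have x: "x \<in> carrier_vec R" and y: "y \<in> carrier_vec K"
    using G_carrier v by (auto simp: x_def y_def)
  define P where "P = (map_mat of_real D *\<^sub>v y) \<bullet>c y"
  define Q where "Q = x \<bullet>c x"
  have "0 \<le> Q" by (simp add: Q_def conjugate_square_ge_0_vec)
  then have Q_conj: "cnj Q = Q" by (simp add: less_eq_complex_def complex_eq_iff)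
  have "P = (ev \<cdot>\<^sub>v v) \<bullet>c y" using v by (simp add: P_def ev[symmetric] gram_mult_vec x_def y_def)
  also have "\<dots> = ev * conjugate (y \<bullet>c v)"
    using v y by (simp add: cscalar_prod_swap[OF y v])
  also have "y \<bullet>c v = Q"
    using of_real_transpose_cscalar_prod[OF G_carrier v x] by (simp add: Q_def x_def y_def)
  finally have PQ: "P = ev * Q" by (simp add: Q_conj)
  show ?thesis
  proof (cases "Q = 0")
    case True
    then have "ev \<cdot>\<^sub>v v = 0\<^sub>v K"
      using x gram_mult_vec_eq_0_iff[OF v] by (simp add: Q_def x_def ev)
    moreover obtain i where i: "i < K" "v $ i \<noteq> 0" using v v0 by (auto simp: vec_eq_iff)
    ultimately have "ev * v $ i = 0" using v by (metis carrier_vecD index_smult_vec(1) index_zero_vec(1))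
    then have "ev = 0" using i by simp
    then show ?thesis by simp
  next
    case False
    have "0 \<le> P" unfolding P_def by (rule weighted_cscalar_prod_nonneg[OF y])
    then show ?thesis using \<open>0 \<le> Q\<close> False PQ
      by (auto simp: less_eq_complex_def complex_eq_iff zero_le_mult_iff)
  qed
qed

end

theorem lemma5:
  fixes m n :: nat and E :: "(nat \<times> nat) list"
    and Cm :: "nat \<times> nat \<Rightarrow> real mat" and W :: "real mat"
  assumes m_pos: "m \<ge> 1"
    and arcs: "\<forall>(j,i) \<in> set E. j < m \<and> i < m \<and> j \<noteq> i"
    and dist: "distinct E"
    and Ccols: "\<forall>e \<in> set E. dim_col (Cm e) = n"
    and Wdim: "W \<in> carrier_mat m m"
    and Wdiag: "diagonal_mat W"
    and Wpos: "\<forall>i < m. W $$ (i,i) > 0"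
    and wellconf:
      "mat_kernel (blockdiag (map Cm E) * transpose_mat (kron (incidence m E) (1\<^sub>m n)))
         = col_space (kron (mat m 1 (\<lambda>_. 1)) (1\<^sub>m n))"
  shows
    "let Jb = kron (incidence m E) (1\<^sub>m n);
         C = blockdiag (map Cm E);
         Wb = kron W (1\<^sub>m n);
         M = map_mat complex_of_real (Wb * Jb * transpose_mat C * C * transpose_mat Jb)
     in order 0 (char_poly M) = n \<and>
        (\<forall>ev. eigenvalue M ev \<longrightarrow> ev = 0 \<or> (Im ev = 0 \<and> Re ev > 0))"
proof -
  define Jb where "Jb = kron (incidence m E) (1\<^sub>m n)"
  define C where "C = blockdiag (map Cm E)"
  define Wb where "Wb = kron W (1\<^sub>m n)"
  define G where "G = C * transpose_mat Jb"
  have "dim_col C = length (map Cm E) * n"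
    unfolding C_def by (rule dim_col_blockdiag) (use Ccols in auto)
  then have C: "C \<in> carrier_mat (dim_row C) (length E * n)" by (intro carrier_matI) simp_all
  have Jb: "Jb \<in> carrier_mat (m * n) (length E * n)"
    unfolding Jb_def by (intro carrier_matI) (simp_all add: incidence_def)
  have Wb: "Wb \<in> carrier_mat (m * n) (m * n)"
    using Wdim unfolding Wb_def by (intro carrier_matI) simp_all
  interpret weighted_gram Wb G "m * n" "dim_row C"
  proof
    show "diagonal_mat Wb" by (simp add: Wb_def diagonal_mat_kron_one Wdiag)
    show "\<forall>i<m * n. 0 < Wb $$ (i,i)"
      using Wdim Wpos by (auto simp: Wb_def index_kron_one less_mult_imp_div_less)
    show "G \<in> carrier_mat (dim_row C) (m * n)"
      unfolding G_def by (rule mult_carrier_mat[OF C]) (simp add: Jb)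
  qed (rule Wb)
  have M: "map_mat of_real (Wb * Jb * transpose_mat C * C * transpose_mat Jb) = gram"
    unfolding gram_def unfolding G_def mult_transpose_eq_gram[OF Wb Jb C] ..
  have ker_G: "mat_kernel G = periodic_vecs (m * n) n"
    unfolding G_def C_def Jb_def wellconf by (rule col_space_kron_ones_one)
  have "mat_kernel gram = periodic_vecs (m * n) n"
    using mat_kernel_of_real_periodic[OF G_carrier ker_G] by (simp add: mat_kernel_gram)
  then have "kernel_dim gram = n"
    using gram_carrier m_pos by (intro kernel_dim_eq_period) auto
  then have "order 0 (char_poly gram) = n" by (simp add: order_zero_char_poly_gram)
  moreover have "ev = 0 \<or> (Im ev = 0 \<and> Re ev > 0)" if "eigenvalue gram ev" for ev
    using gram_eigenvalue_nonneg[OF that] by (auto simp: less_eq_complex_def complex_eq_iff)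
  ultimately show ?thesis
    unfolding Let_def Jb_def[symmetric] C_def[symmetric] Wb_def[symmetric] M by blast
qed

end
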